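(* Let $(N_1(t))_{t\ge 0}$ be a standard Poisson process with rate $1$, let $\lambda:[0,\infty)\to(0,\infty)$ be locally integrable, $\Lambda(t)=\int_0^t\lambda(\tau)\,d\tau$ with $\Lambda(t)\to\infty$ as $t\to\infty$. Let $\alpha\in(0,1)$, let $L_\alpha$ be an $\alpha$-stable subordinator ($\mathbb{E}[e^{-uL_\alpha(t)}]=e^{-tu^\alpha}$), $Y_\alpha(t)=\inf\{u\ge0:L_\alpha(u)>t\}$, independent of $N_1$, and $N_\alpha(t)=N_1(\Lambda(Y_\alpha(t)))$. Suppose $\Lambda$ is regularly varying with index $\beta\in\mathbb{R}$, i.e. $\Lambda(xt)/\Lambda(t)\to x^\beta$ as $t\to\infty$ for every $x>0$. Then $$\frac{N_\alpha(t)}{\Lambda(t^\alpha)}\xrightarrow[t\to\infty]{d}(Y_\alpha(1))^\beta.$$ *)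

theory Defs
  imports "HOL-Probability.Probability"
begin

definition std_poisson_process :: "'a measure \<Rightarrow> (real \<Rightarrow> 'a \<Rightarrow> nat) \<Rightarrow> bool" where
  "std_poisson_process M N \<longleftrightarrow>
     (\<forall>t\<ge>0. N t \<in> measurable M (count_space UNIV)) \<and>
     (\<forall>\<omega>\<in>space M. N 0 \<omega> = 0) \<and>
     (\<forall>\<omega>\<in>space M. mono_on {0..} (\<lambda>t. N t \<omega>)) \<and>
     (\<forall>\<omega>\<in>space M. \<forall>t\<ge>0. eventually (\<lambda>s. N s \<omega> = N t \<omega>) (at_right t)) \<and>
     (\<forall>(n::nat) (ts::nat \<Rightarrow> real). 0 \<le> ts 0 \<and> strict_mono ts \<longrightarrow>
        prob_space.indep_vars M (\<lambda>_. count_space UNIV)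
          (\<lambda>i \<omega>. N (ts (Suc i)) \<omega> - N (ts i) \<omega>) {..<n}) \<and>
     (\<forall>s t k. 0 \<le> s \<and> s \<le> t \<longrightarrow>
        measure M {\<omega>\<in>space M. N t \<omega> - N s \<omega> = k} = exp (-(t - s)) * (t - s) ^ k / fact k)"

definition stable_subordinator :: "'a measure \<Rightarrow> real \<Rightarrow> (real \<Rightarrow> 'a \<Rightarrow> real) \<Rightarrow> bool" where
  "stable_subordinator M \<alpha> L \<longleftrightarrow>
     (\<forall>t\<ge>0. L t \<in> borel_measurable M) \<and>
     (\<forall>\<omega>\<in>space M. L 0 \<omega> = 0) \<and>
     (\<forall>\<omega>\<in>space M. mono_on {0..} (\<lambda>t. L t \<omega>)) \<and>
     (\<forall>\<omega>\<in>space M. \<forall>t\<ge>0. continuous (at_right t) (\<lambda>s. L s \<omega>)) \<and>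
     (\<forall>(n::nat) (ts::nat \<Rightarrow> real). 0 \<le> ts 0 \<and> strict_mono ts \<longrightarrow>
        prob_space.indep_vars M (\<lambda>_. borel)
          (\<lambda>i \<omega>. L (ts (Suc i)) \<omega> - L (ts i) \<omega>) {..<n}) \<and>
     (\<forall>s t. 0 \<le> s \<and> s \<le> t \<longrightarrow>
        distr M borel (\<lambda>\<omega>. L t \<omega> - L s \<omega>) = distr M borel (L (t - s))) \<and>
     (\<forall>t u. 0 \<le> t \<and> 0 \<le> u \<longrightarrow>
        (\<integral>\<omega>. exp (- u * L t \<omega>) \<partial>M) = exp (- t * u powr \<alpha>))"

definition conv_distr_at_top :: "'a measure \<Rightarrow> (real \<Rightarrow> 'a \<Rightarrow> real) \<Rightarrow> ('a \<Rightarrow> real) \<Rightarrow> bool" where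
  "conv_distr_at_top M X Y \<longleftrightarrow>
     (\<forall>f::real \<Rightarrow> real. continuous_on UNIV f \<and> bounded (range f) \<longrightarrow>
        ((\<lambda>t. \<integral>\<omega>. f (X t \<omega>) \<partial>M) \<longlongrightarrow> (\<integral>\<omega>. f (Y \<omega>) \<partial>M)) at_top)"

end

theory Submission
  imports Defs
begin

text \<open>
  By independence, \<open>E f(N(\<Lambda>(Y t)) / \<Lambda>(t\<^sup>\<alpha>))\<close> is the integral of
  \<open>g\<^sub>t(y) = E f(N(\<Lambda> y) / \<Lambda>(t\<^sup>\<alpha>))\<close> against the law of \<open>Y t\<close>.
  The Laplace transform \<open>exp (- t u\<^sup>\<alpha>)\<close> makes \<open>L\<close> self-similar, \<open>L(c\<^sup>\<alpha> s) = c L(s)\<close> in law,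
  and since Laplace transforms determine the laws of nonnegative variables this gives
  \<open>Y t = t\<^sup>\<alpha> Y 1\<close> in law. For fixed \<open>y > 0\<close> the Poisson variable \<open>N(\<Lambda>(t\<^sup>\<alpha> y))\<close> has variance
  \<open>\<Lambda>(t\<^sup>\<alpha> y)\<close>, so by Chebyshev it is \<open>\<Lambda>(t\<^sup>\<alpha> y) (1 + o(1))\<close>, and regular variation turns
  \<open>\<Lambda>(t\<^sup>\<alpha> y) / \<Lambda>(t\<^sup>\<alpha>)\<close> into \<open>y\<^sup>\<beta>\<close>; hence \<open>g\<^sub>t(t\<^sup>\<alpha> y) \<rightarrow> f(y\<^sup>\<beta>)\<close>, and dominated
  convergence concludes because \<open>Y 1 > 0\<close> almost surely.

  Since \<open>Y t\<close> is an infimum over uncountably many times, it is replaced by the infimum over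
  rational times, which agrees with it on the event that \<open>L\<close> exceeds \<open>t\<close>; this event has full
  probability, as \<open>P(L n \<le> t) \<le> e\<^sup>t\<^sup>-\<^sup>n\<close>. Likewise the Poisson path is evaluated at a random
  time through its values at rational times to the right.
\<close>

section \<open>Concentration of the Poisson process\<close>

lemma poisson_weights_sums:
  fixes s :: real
  shows "(\<lambda>k. exp (- s) * s ^ k / fact k) sums 1"
    and "(\<lambda>k. real k * (exp (- s) * s ^ k / fact k)) sums s"
    and "(\<lambda>k. real k * (real k - 1) * (exp (- s) * s ^ k / fact k)) sums s\<^sup>2"
proof -
  have "(\<lambda>k. s ^ k / fact k) sums exp s"
    using exp_converges[of s] by (simp add: divide_inverse_commute scaleR_conv_of_real)
  then have e: "(\<lambda>k. exp (- s) * (s ^ k / fact k)) sums 1"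
    using sums_mult[of "\<lambda>k. s ^ k / fact k" "exp s" "exp (- s)"] by (simp add: exp_minus field_simps)
  then show "(\<lambda>k. exp (- s) * s ^ k / fact k) sums 1"
    by simp
  have "(\<lambda>k. s * (exp (- s) * (s ^ k / fact k))) sums s"
    using sums_mult[OF e, of s] by simp
  moreover have "(\<lambda>k. real (Suc k) * (exp (- s) * s ^ Suc k / fact (Suc k)))
      = (\<lambda>k. s * (exp (- s) * (s ^ k / fact k)))"
    by (rule ext) (simp add: fact_Suc del: of_nat_Suc)
  ultimately show "(\<lambda>k. real k * (exp (- s) * s ^ k / fact k)) sums s"
    using sums_Suc_iff[where f="\<lambda>k. real k * (exp (- s) * s ^ k / fact k)"] by simp
  have "(\<lambda>k. s\<^sup>2 * (exp (- s) * (s ^ k / fact k))) sums s\<^sup>2"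
    using sums_mult[OF e, of "s\<^sup>2"] by simp
  moreover have "(\<lambda>k. real (Suc (Suc k)) * (real (Suc (Suc k)) - 1)
        * (exp (- s) * s ^ Suc (Suc k) / fact (Suc (Suc k))))
      = (\<lambda>k. s\<^sup>2 * (exp (- s) * (s ^ k / fact k)))"
  proof
    fix k
    have h: "real (Suc (Suc k)) - 1 = real (Suc k)" by simp
    show "real (Suc (Suc k)) * (real (Suc (Suc k)) - 1)
        * (exp (- s) * s ^ Suc (Suc k) / fact (Suc (Suc k))) = s\<^sup>2 * (exp (- s) * (s ^ k / fact k))"
      unfolding h by (simp add: fact_Suc power2_eq_square del: of_nat_Suc)
  qed
  ultimately have "(\<lambda>k. real (Suc (Suc k)) * (real (Suc (Suc k)) - 1)
      * (exp (- s) * s ^ Suc (Suc k) / fact (Suc (Suc k)))) sums s\<^sup>2"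
    by simp
  then have "(\<lambda>k. real (Suc k) * (real (Suc k) - 1) * (exp (- s) * s ^ Suc k / fact (Suc k))) sums s\<^sup>2"
    using sums_Suc_iff[where f="\<lambda>k. real (Suc k) * (real (Suc k) - 1) * (exp (- s) * s ^ Suc k / fact (Suc k))"]
    by simp
  then show "(\<lambda>k. real k * (real k - 1) * (exp (- s) * s ^ k / fact k)) sums s\<^sup>2"
    using sums_Suc_iff[where f="\<lambda>k. real k * (real k - 1) * (exp (- s) * s ^ k / fact k)"] by simp
qed

lemma poisson_variance_sums:
  fixes s :: real
  shows "(\<lambda>k. (real k - s)\<^sup>2 * (exp (- s) * s ^ k / fact k)) sums s"
proof -
  note S = poisson_weights_sums[of s]
  have "(\<lambda>k. real k * (real k - 1) * (exp (- s) * s ^ k / fact k)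
      + (1 - 2 * s) * (real k * (exp (- s) * s ^ k / fact k)) + s\<^sup>2 * (exp (- s) * s ^ k / fact k))
      sums (s\<^sup>2 + (1 - 2 * s) * s + s\<^sup>2 * 1)"
    by (intro sums_add sums_mult S)
  moreover have "s\<^sup>2 + (1 - 2 * s) * s + s\<^sup>2 * 1 = s"
    by (simp add: algebra_simps power2_eq_square)
  moreover have "x * (x - 1) * p + (1 - 2 * s) * (x * p) + s\<^sup>2 * p = (x - s)\<^sup>2 * p" for x p :: real
    by (simp add: algebra_simps power2_eq_square)
  ultimately show ?thesis
    by (simp only:)
qed

lemma std_poisson_process_measurable:
  "std_poisson_process M N \<Longrightarrow> 0 \<le> s \<Longrightarrow> N s \<in> measurable M (count_space UNIV)"
  by (simp add: std_poisson_process_def)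

lemma (in prob_space) std_poisson_process_emeasure:
  assumes P: "std_poisson_process M N" and s: "0 \<le> s"
  shows "emeasure M {\<omega>\<in>space M. N s \<omega> = k} = ennreal (exp (- s) * s ^ k / fact k)"
proof -
  have [measurable]: "N s \<in> measurable M (count_space UNIV)"
    using P s by (rule std_poisson_process_measurable)
  have "measure M {\<omega>\<in>space M. N s \<omega> - N 0 \<omega> = k} = exp (-(s - 0)) * (s - 0) ^ k / fact k"
    using P s unfolding std_poisson_process_def by blast
  moreover have "{\<omega>\<in>space M. N s \<omega> - N 0 \<omega> = k} = {\<omega>\<in>space M. N s \<omega> = k}"
    using P by (auto simp: std_poisson_process_def)
  ultimately show ?thesis
    by (simp add: emeasure_eq_measure)
qed

lemma (in prob_space) std_poisson_process_nn_integral_variance: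
  assumes P: "std_poisson_process M N" and s: "0 \<le> s"
  shows "(\<integral>\<^sup>+\<omega>. ennreal ((real (N s \<omega>) - s)\<^sup>2) \<partial>M) = ennreal s"
proof -
  have [measurable]: "N s \<in> measurable M (count_space UNIV)"
    using P s by (rule std_poisson_process_measurable)
  let ?A = "\<lambda>k. {\<omega>\<in>space M. N s \<omega> = k}"
  have split: "ennreal ((real (N s \<omega>) - s)\<^sup>2) = (\<Sum>k. ennreal ((real k - s)\<^sup>2) * indicator (?A k) \<omega>)"
    if "\<omega> \<in> space M" for \<omega>
  proof -
    have "(\<lambda>k. if k = N s \<omega> then ennreal ((real k - s)\<^sup>2) else 0) sums ennreal ((real (N s \<omega>) - s)\<^sup>2)"
      by (rule sums_single[where f="\<lambda>k. ennreal ((real k - s)\<^sup>2)", simplified])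
    moreover have "(\<lambda>k. if k = N s \<omega> then ennreal ((real k - s)\<^sup>2) else 0)
        = (\<lambda>k. ennreal ((real k - s)\<^sup>2) * indicator (?A k) \<omega>)"
      using that by (auto simp: indicator_def)
    ultimately show ?thesis
      by (simp add: sums_iff)
  qed
  have "(\<integral>\<^sup>+\<omega>. ennreal ((real (N s \<omega>) - s)\<^sup>2) \<partial>M)
      = (\<integral>\<^sup>+\<omega>. (\<Sum>k. ennreal ((real k - s)\<^sup>2) * indicator (?A k) \<omega>) \<partial>M)"
    by (rule nn_integral_cong) (simp add: split)
  also have "\<dots> = (\<Sum>k. \<integral>\<^sup>+\<omega>. ennreal ((real k - s)\<^sup>2) * indicator (?A k) \<omega> \<partial>M)"
    by (rule nn_integral_suminf) measurable
  also have "\<dots> = (\<Sum>k. ennreal ((real k - s)\<^sup>2 * (exp (- s) * s ^ k / fact k)))"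
  proof (rule suminf_cong)
    fix k
    have "?A k \<in> sets M" by measurable
    then show "(\<integral>\<^sup>+\<omega>. ennreal ((real k - s)\<^sup>2) * indicator (?A k) \<omega> \<partial>M)
        = ennreal ((real k - s)\<^sup>2 * (exp (- s) * s ^ k / fact k))"
      using std_poisson_process_emeasure[OF P s, of k]
      by (simp add: nn_integral_cmult_indicator ennreal_mult'[symmetric] mult.assoc)
  qed
  also have "\<dots> = ennreal s"
    by (rule suminf_ennreal_eq[OF _ poisson_variance_sums]) (use s in auto)
  finally show ?thesis .
qed

lemma (in prob_space) std_poisson_process_deviation_prob:
  assumes P: "std_poisson_process M N" and s: "0 \<le> s" and r: "0 < r"
  shows "prob {\<omega>\<in>space M. r \<le> \<bar>real (N s \<omega>) - s\<bar>} \<le> s / r\<^sup>2"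
proof -
  have [measurable]: "N s \<in> measurable M (count_space UNIV)"
    using P s by (rule std_poisson_process_measurable)
  have level: "(1 \<le> ennreal (1 / r\<^sup>2) * ennreal ((x - s)\<^sup>2)) \<longleftrightarrow> r \<le> \<bar>x - s\<bar>" for x :: real
  proof -
    have "ennreal (1 / r\<^sup>2) * ennreal ((x - s)\<^sup>2) = ennreal ((x - s)\<^sup>2 / r\<^sup>2)"
      by (simp add: ennreal_mult[symmetric])
    moreover have "(1 \<le> (x - s)\<^sup>2 / r\<^sup>2) \<longleftrightarrow> r\<^sup>2 \<le> (x - s)\<^sup>2"
      using r by (simp add: field_simps)
    moreover have "r\<^sup>2 \<le> (x - s)\<^sup>2 \<longleftrightarrow> r \<le> \<bar>x - s\<bar>"
      using r by (metis abs_le_square_iff abs_of_pos)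
    ultimately show ?thesis
      by (simp add: ennreal_ge_1)
  qed
  have "emeasure M {\<omega>\<in>space M. 1 \<le> ennreal (1 / r\<^sup>2) * ennreal ((real (N s \<omega>) - s)\<^sup>2)}
      \<le> ennreal (1 / r\<^sup>2) * (\<integral>\<^sup>+\<omega>. ennreal ((real (N s \<omega>) - s)\<^sup>2) * indicator (space M) \<omega> \<partial>M)"
    by (rule nn_integral_Markov_inequality) measurable
  also have "(\<integral>\<^sup>+\<omega>. ennreal ((real (N s \<omega>) - s)\<^sup>2) * indicator (space M) \<omega> \<partial>M)
      = (\<integral>\<^sup>+\<omega>. ennreal ((real (N s \<omega>) - s)\<^sup>2) \<partial>M)"
    by (rule nn_integral_cong) auto
  also have "\<dots> = ennreal s"
    by (rule std_poisson_process_nn_integral_variance[OF P s])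
  finally have "emeasure M {\<omega>\<in>space M. r \<le> \<bar>real (N s \<omega>) - s\<bar>} \<le> ennreal (s / r\<^sup>2)"
    using s by (simp only: level) (simp add: ennreal_mult[symmetric])
  then have "ennreal (prob {\<omega>\<in>space M. r \<le> \<bar>real (N s \<omega>) - s\<bar>}) \<le> ennreal (s / r\<^sup>2)"
    by (simp add: emeasure_eq_measure)
  then show ?thesis
    using s r by (subst (asm) ennreal_le_iff) auto
qed

lemma (in prob_space) abs_integral_diff_le_indicator:
  fixes g :: "'a \<Rightarrow> real"
  assumes g: "integrable M g" and A: "A \<in> events"
    and pointwise: "\<And>\<omega>. \<omega> \<in> space M \<Longrightarrow> \<bar>g \<omega> - a\<bar> \<le> e + C * indicator A \<omega>"
  shows "\<bar>(\<integral>\<omega>. g \<omega> \<partial>M) - a\<bar> \<le> e + C * prob A"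
proof -
  have int_A: "integrable M (indicator A :: 'a \<Rightarrow> real)"
    using A by (simp add: emeasure_eq_measure)
  have "\<bar>(\<integral>\<omega>. g \<omega> \<partial>M) - a\<bar> = \<bar>\<integral>\<omega>. g \<omega> - a \<partial>M\<bar>"
    using g by (simp add: prob_space)
  also have "\<dots> \<le> (\<integral>\<omega>. \<bar>g \<omega> - a\<bar> \<partial>M)"
    by (rule integral_abs_bound)
  also have "\<dots> \<le> (\<integral>\<omega>. e + C * indicator A \<omega> \<partial>M)"
    using g int_A by (intro integral_mono) (auto intro!: integrable_abs pointwise)
  also have "\<dots> = e + C * prob A"
    using int_A A by (simp add: prob_space Int_absorb2 sets.sets_into_space)
  finally show ?thesis .
qed

lemma (in prob_space) std_poisson_process_integral_close:
  fixes f :: "real \<Rightarrow> real"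
  assumes P: "std_poisson_process M N"
    and f: "f \<in> borel_measurable borel" and fB: "\<And>y. \<bar>f y\<bar> \<le> B"
    and fd: "\<And>z. \<bar>z - m\<bar> < d \<Longrightarrow> \<bar>f z - f m\<bar> \<le> e"
    and s: "0 \<le> s" and c: "0 < c" and d: "0 < d" and sm: "\<bar>s / c - m\<bar> < d / 2"
  shows "\<bar>(\<integral>\<omega>. f (real (N s \<omega>) / c) \<partial>M) - f m\<bar> \<le> e + 8 * B * s / (c * d)\<^sup>2"
proof -
  have [measurable]: "N s \<in> measurable M (count_space UNIV)"
    using P s by (rule std_poisson_process_measurable)
  note f[measurable]
  have e: "0 \<le> e"
    using fd[of m] d by simp
  have int: "integrable M (\<lambda>\<omega>. f (real (N s \<omega>) / c))"
    by (rule integrable_const_bound[where B=B]) (auto simp: fB)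
  define A where "A = {\<omega>\<in>space M. c * d / 2 \<le> \<bar>real (N s \<omega>) - s\<bar>}"
  have A[measurable]: "A \<in> sets M"
    unfolding A_def by measurable
  have "prob A \<le> s / (c * d / 2)\<^sup>2"
    unfolding A_def by (rule std_poisson_process_deviation_prob[OF P s]) (use c d in simp)
  also have "\<dots> = 4 * s / (c * d)\<^sup>2"
    by (simp add: field_simps power2_eq_square)
  finally have PA: "prob A \<le> 4 * s / (c * d)\<^sup>2" .
  have pointwise: "\<bar>f (real (N s \<omega>) / c) - f m\<bar> \<le> e + 2 * B * indicator A \<omega>"
    if \<omega>: "\<omega> \<in> space M" for \<omega>
  proof (cases "\<omega> \<in> A")
    case True
    have "\<bar>f (real (N s \<omega>) / c) - f m\<bar> \<le> \<bar>f (real (N s \<omega>) / c)\<bar> + \<bar>f m\<bar>"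
      by linarith
    also have "\<dots> \<le> 2 * B"
      using fB[of "real (N s \<omega>) / c"] fB[of m] by linarith
    finally show ?thesis
      using True e by simp
  next
    case False
    then have "\<bar>real (N s \<omega>) - s\<bar> < c * d / 2"
      using \<omega> by (auto simp: A_def)
    then have "\<bar>real (N s \<omega>) / c - s / c\<bar> < d / 2"
      using c by (simp add: diff_divide_distrib[symmetric] field_simps)
    then have "\<bar>f (real (N s \<omega>) / c) - f m\<bar> \<le> e"
      using sm by (intro fd) linarith
    then show ?thesis
      using False by simp
  qed
  have "\<bar>(\<integral>\<omega>. f (real (N s \<omega>) / c) \<partial>M) - f m\<bar> \<le> e + 2 * B * prob A"
    using int A pointwise by (rule abs_integral_diff_le_indicator)
  also have "\<dots> \<le> e + 2 * B * (4 * s / (c * d)\<^sup>2)"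
    using PA fB[of 0] by (intro add_left_mono mult_left_mono) auto
  finally show ?thesis
    by simp
qed

lemma (in prob_space) std_poisson_process_scaled_tendsto:
  fixes F :: "'b filter" and s c :: "'b \<Rightarrow> real" and f :: "real \<Rightarrow> real"
  assumes P: "std_poisson_process M N"
    and f: "continuous_on UNIV f" and fB: "\<And>y. \<bar>f y\<bar> \<le> B"
    and s: "eventually (\<lambda>x. 0 \<le> s x) F"
    and c: "filterlim c at_top F"
    and sc: "((\<lambda>x. s x / c x) \<longlongrightarrow> m) F"
  shows "((\<lambda>x. \<integral>\<omega>. f (real (N (s x) \<omega>) / c x) \<partial>M) \<longlongrightarrow> f m) F"
proof (rule tendstoI)
  fix e :: real
  assume e: "0 < e"
  have "isCont f m"
    using f by (simp add: continuous_on_eq_continuous_at)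
  then obtain d where d: "0 < d" and fd: "\<And>z. \<bar>z - m\<bar> < d \<Longrightarrow> \<bar>f z - f m\<bar> \<le> e / 2"
    using e unfolding continuous_at_eps_delta dist_real_def
    by (metis half_gt_zero less_eq_real_def)
  have "((\<lambda>x. 8 * B / d\<^sup>2 * (s x / c x) * inverse (c x)) \<longlongrightarrow> 8 * B / d\<^sup>2 * m * 0) F"
    by (intro tendsto_intros sc tendsto_inverse_0_at_top c)
  then have "eventually (\<lambda>x. 8 * B / d\<^sup>2 * (s x / c x) * inverse (c x) < e / 2) F"
    using e by (intro order_tendstoD) auto
  moreover have "eventually (\<lambda>x. \<bar>s x / c x - m\<bar> < d / 2) F"
    using sc d unfolding tendsto_iff dist_real_def by (metis half_gt_zero)
  moreover have "eventually (\<lambda>x. 0 < c x) F"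
    using c by (simp add: filterlim_at_top_dense)
  ultimately show "eventually (\<lambda>x. dist (\<integral>\<omega>. f (real (N (s x) \<omega>) / c x) \<partial>M) (f m) < e) F"
    using s
  proof eventually_elim
    case (elim x)
    have "\<bar>(\<integral>\<omega>. f (real (N (s x) \<omega>) / c x) \<partial>M) - f m\<bar> \<le> e / 2 + 8 * B * s x / (c x * d)\<^sup>2"
      using elim d f fd fB
      by (intro std_poisson_process_integral_close[OF P]) (auto simp: borel_measurable_continuous_onI)
    also have "8 * B * s x / (c x * d)\<^sup>2 = 8 * B / d\<^sup>2 * (s x / c x) * inverse (c x)"
      using elim d by (simp add: field_simps power2_eq_square)
    finally show ?case
      using elim by (simp add: dist_real_def)
  qed
qed

section \<open>Laplace transforms determine distributions\<close>

lemma (in prob_space) integrable_continuous_comp_Icc: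
  fixes g :: "real \<Rightarrow> real"
  assumes V: "V \<in> borel_measurable M" and V_range: "\<And>\<omega>. \<omega> \<in> space M \<Longrightarrow> V \<omega> \<in> {a..b}"
    and g: "continuous_on UNIV g"
  shows "integrable M (\<lambda>\<omega>. g (V \<omega>))"
proof -
  have "compact (g ` {a..b})"
    by (intro compact_continuous_image continuous_on_subset[OF g]) auto
  then obtain C where C: "\<And>y. y \<in> {a..b} \<Longrightarrow> norm (g y) \<le> C"
    by (meson bounded_iff compact_imp_bounded image_eqI)
  have "g \<in> borel_measurable borel"
    using g by (rule borel_measurable_continuous_onI)
  then show ?thesis
    using V V_range C by (intro integrable_const_bound[where B=C]) auto
qed

lemma (in prob_space) integral_continuous_comp_diff_le:
  fixes g p :: "real \<Rightarrow> real"
  assumes V: "V \<in> borel_measurable M" and V_range: "\<And>\<omega>. \<omega> \<in> space M \<Longrightarrow> V \<omega> \<in> {a..b}"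
    and g: "continuous_on UNIV g" and p: "continuous_on UNIV p"
    and close: "\<And>y. y \<in> {a..b} \<Longrightarrow> \<bar>g y - p y\<bar> \<le> e"
  shows "\<bar>(\<integral>\<omega>. g (V \<omega>) \<partial>M) - (\<integral>\<omega>. p (V \<omega>) \<partial>M)\<bar> \<le> e"
proof -
  have int: "integrable M (\<lambda>\<omega>. h (V \<omega>))" if "continuous_on UNIV h" for h :: "real \<Rightarrow> real"
    using V V_range that by (rule integrable_continuous_comp_Icc)
  have "\<bar>(\<integral>\<omega>. g (V \<omega>) \<partial>M) - (\<integral>\<omega>. p (V \<omega>) \<partial>M)\<bar> = \<bar>\<integral>\<omega>. g (V \<omega>) - p (V \<omega>) \<partial>M\<bar>"
    using int[OF g] int[OF p] by simp
  also have "\<dots> \<le> (\<integral>\<omega>. \<bar>g (V \<omega>) - p (V \<omega>)\<bar> \<partial>M)"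
    by (rule integral_abs_bound)
  also have "\<dots> \<le> (\<integral>\<omega>. e \<partial>M)"
    using int[OF g] int[OF p] V_range close by (intro integral_mono) auto
  finally show ?thesis
    by (simp add: prob_space)
qed

lemma (in prob_space) integral_polynomial_exp_eq_of_laplace_eq:
  fixes X X' :: "'a \<Rightarrow> real"
  assumes X: "X \<in> borel_measurable M" and X': "X' \<in> borel_measurable M"
    and X_nonneg: "\<And>\<omega>. \<omega> \<in> space M \<Longrightarrow> 0 \<le> X \<omega>"
    and X'_nonneg: "\<And>\<omega>. \<omega> \<in> space M \<Longrightarrow> 0 \<le> X' \<omega>"
    and laplace: "\<And>u. 0 \<le> u \<Longrightarrow> (\<integral>\<omega>. exp (- u * X \<omega>) \<partial>M) = (\<integral>\<omega>. exp (- u * X' \<omega>) \<partial>M)"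
  shows "(\<integral>\<omega>. (\<Sum>i\<le>n. a i * exp (- X \<omega>) ^ i) \<partial>M) = (\<integral>\<omega>. (\<Sum>i\<le>n. a i * exp (- X' \<omega>) ^ i) \<partial>M)"
proof -
  have power_exp: "exp (- z) ^ i = exp (- real i * z)" for z :: real and i
    by (metis exp_of_nat_mult mult_minus_left mult_minus_right)
  have int: "integrable M (\<lambda>\<omega>. exp (- real i * X \<omega>))" "integrable M (\<lambda>\<omega>. exp (- real i * X' \<omega>))" for i
    using X X' X_nonneg X'_nonneg by (auto intro!: integrable_const_bound[where B=1])
  have "(\<integral>\<omega>. (\<Sum>i\<le>n. a i * exp (- X \<omega>) ^ i) \<partial>M) = (\<Sum>i\<le>n. a i * (\<integral>\<omega>. exp (- real i * X \<omega>) \<partial>M))"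
    unfolding power_exp by (subst Bochner_Integration.integral_sum) (auto intro!: integrable_mult_right simp: int[simplified])
  also have "\<dots> = (\<Sum>i\<le>n. a i * (\<integral>\<omega>. exp (- real i * X' \<omega>) \<partial>M))"
    using laplace by simp
  also have "\<dots> = (\<integral>\<omega>. (\<Sum>i\<le>n. a i * exp (- X' \<omega>) ^ i) \<partial>M)"
    unfolding power_exp by (subst Bochner_Integration.integral_sum) (auto intro!: integrable_mult_right simp: int[simplified])
  finally show ?thesis .
qed

lemma (in prob_space) integral_continuous_exp_eq_of_laplace_eq:
  fixes X X' :: "'a \<Rightarrow> real" and g :: "real \<Rightarrow> real"
  assumes X: "X \<in> borel_measurable M" and X': "X' \<in> borel_measurable M"
    and X_nonneg: "\<And>\<omega>. \<omega> \<in> space M \<Longrightarrow> 0 \<le> X \<omega>"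
    and X'_nonneg: "\<And>\<omega>. \<omega> \<in> space M \<Longrightarrow> 0 \<le> X' \<omega>"
    and laplace: "\<And>u. 0 \<le> u \<Longrightarrow> (\<integral>\<omega>. exp (- u * X \<omega>) \<partial>M) = (\<integral>\<omega>. exp (- u * X' \<omega>) \<partial>M)"
    and g: "continuous_on UNIV g"
  shows "(\<integral>\<omega>. g (exp (- X \<omega>)) \<partial>M) = (\<integral>\<omega>. g (exp (- X' \<omega>)) \<partial>M)"
proof -
  have approx: "\<bar>(\<integral>\<omega>. g (exp (- X \<omega>)) \<partial>M) - (\<integral>\<omega>. g (exp (- X' \<omega>)) \<partial>M)\<bar> \<le> 2 * e"
    if e: "0 < e" for e
  proof -
    obtain p where p: "real_polynomial_function p" and gp: "\<And>y. y \<in> {0..1} \<Longrightarrow> \<bar>g y - p y\<bar> < e"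
      using Stone_Weierstrass_real_polynomial_function[of "{0..1::real}" g e] e
        continuous_on_subset[OF g] compact_Icc by auto
    then obtain a n where p_eq: "p = (\<lambda>x. \<Sum>i\<le>n. a i * x ^ i)"
      using real_polynomial_function_iff_sum by auto
    have p_cont: "continuous_on UNIV p"
      using p by (simp add: continuous_on_polymonial_function real_polynomial_function_eq)
    have close: "\<bar>(\<integral>\<omega>. g (exp (- Z \<omega>)) \<partial>M) - (\<integral>\<omega>. p (exp (- Z \<omega>)) \<partial>M)\<bar> \<le> e"
      if "Z \<in> borel_measurable M" and "\<And>\<omega>. \<omega> \<in> space M \<Longrightarrow> 0 \<le> Z \<omega>" for Z
      using that gp by (intro integral_continuous_comp_diff_le[OF _ _ g p_cont, of _ 0 1])
        (auto intro: less_imp_le)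
    have "(\<integral>\<omega>. p (exp (- X \<omega>)) \<partial>M) = (\<integral>\<omega>. p (exp (- X' \<omega>)) \<partial>M)"
      unfolding p_eq by (rule integral_polynomial_exp_eq_of_laplace_eq[OF X X' X_nonneg X'_nonneg laplace])
    then show ?thesis
      using close[OF X X_nonneg] close[OF X' X'_nonneg] by linarith
  qed
  have "\<bar>(\<integral>\<omega>. g (exp (- X \<omega>)) \<partial>M) - (\<integral>\<omega>. g (exp (- X' \<omega>)) \<partial>M)\<bar> \<le> 0"
  proof (rule field_le_epsilon)
    fix e :: real
    assume "0 < e"
    then show "\<bar>(\<integral>\<omega>. g (exp (- X \<omega>)) \<partial>M) - (\<integral>\<omega>. g (exp (- X' \<omega>)) \<partial>M)\<bar> \<le> 0 + e"
      using approx[of "e / 2"] by simp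
  qed
  then show ?thesis
    by simp
qed

lemma tendsto_ramp_indicator:
  fixes a y :: real
  shows "(\<lambda>n. min 1 (max 0 (real n * (y - a) + 1))) \<longlonglongrightarrow> (if a \<le> y then 1 else 0)"
proof (cases "a \<le> y")
  case True
  then show ?thesis
    by simp
next
  case False
  obtain N :: nat where N: "1 / (a - y) < real N"
    using reals_Archimedean2 by blast
  have "min 1 (max 0 (real n * (y - a) + 1)) = 0" if "N \<le> n" for n
  proof -
    have "1 / (a - y) < real n"
      using N that by linarith
    then have "1 < real n * (a - y)"
      using False by (simp add: field_simps)
    then show ?thesis
      by (simp add: algebra_simps)
  qed
  then have "eventually (\<lambda>n. min 1 (max 0 (real n * (y - a) + 1)) = 0) sequentially"
    by (auto simp: eventually_sequentially)
  then show ?thesis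
    using False by (simp add: tendsto_eventually)
qed

lemma (in prob_space) integral_ramp_exp_tendsto_prob:
  assumes Z: "Z \<in> borel_measurable M"
  shows "(\<lambda>n. \<integral>\<omega>. min 1 (max 0 (real n * (exp (- Z \<omega>) - exp (- c)) + 1)) \<partial>M)
    \<longlonglongrightarrow> prob {\<omega>\<in>space M. Z \<omega> \<le> c}"
proof -
  have "(\<lambda>n. \<integral>\<omega>. min 1 (max 0 (real n * (exp (- Z \<omega>) - exp (- c)) + 1)) \<partial>M)
      \<longlonglongrightarrow> (\<integral>\<omega>. indicator {\<omega>\<in>space M. Z \<omega> \<le> c} \<omega> \<partial>M)"
  proof (rule integral_dominated_convergence[where w="\<lambda>_. 1"])
    show "AE \<omega> in M. (\<lambda>n. min 1 (max 0 (real n * (exp (- Z \<omega>) - exp (- c)) + 1)))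
        \<longlonglongrightarrow> indicator {\<omega> \<in> space M. Z \<omega> \<le> c} \<omega>"
    proof (rule AE_I2)
      fix \<omega>
      assume "\<omega> \<in> space M"
      then show "(\<lambda>n. min 1 (max 0 (real n * (exp (- Z \<omega>) - exp (- c)) + 1)))
          \<longlonglongrightarrow> indicator {\<omega> \<in> space M. Z \<omega> \<le> c} \<omega>"
        using tendsto_ramp_indicator[of "exp (- Z \<omega>)" "exp (- c)"]
        by (cases "Z \<omega> \<le> c") (auto simp: indicator_def)
    qed
  qed (use Z in auto)
  then show ?thesis
    using Z by simp
qed

lemma (in prob_space) distr_eq_of_laplace_eq:
  fixes X X' :: "'a \<Rightarrow> real"
  assumes X: "X \<in> borel_measurable M" and X': "X' \<in> borel_measurable M"
    and X_nonneg: "\<And>\<omega>. \<omega> \<in> space M \<Longrightarrow> 0 \<le> X \<omega>"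
    and X'_nonneg: "\<And>\<omega>. \<omega> \<in> space M \<Longrightarrow> 0 \<le> X' \<omega>"
    and laplace: "\<And>u. 0 \<le> u \<Longrightarrow> (\<integral>\<omega>. exp (- u * X \<omega>) \<partial>M) = (\<integral>\<omega>. exp (- u * X' \<omega>) \<partial>M)"
  shows "distr M borel X = distr M borel X'"
proof (rule cdf_unique)
  show "real_distribution (distr M borel X)" "real_distribution (distr M borel X')"
    using X X' by (auto intro: real_distribution_distr)
  have "prob {\<omega>\<in>space M. X \<omega> \<le> c} = prob {\<omega>\<in>space M. X' \<omega> \<le> c}" for c
  proof (rule LIMSEQ_unique[OF integral_ramp_exp_tendsto_prob[OF X]])
    have "(\<integral>\<omega>. min 1 (max 0 (real n * (exp (- X \<omega>) - exp (- c)) + 1)) \<partial>M)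
        = (\<integral>\<omega>. min 1 (max 0 (real n * (exp (- X' \<omega>) - exp (- c)) + 1)) \<partial>M)" for n
      by (rule integral_continuous_exp_eq_of_laplace_eq[OF X X' X_nonneg X'_nonneg laplace,
            of "\<lambda>y. min 1 (max 0 (real n * (y - exp (- c)) + 1))"])
        (auto intro!: continuous_intros)
    then show "(\<lambda>n. \<integral>\<omega>. min 1 (max 0 (real n * (exp (- X \<omega>) - exp (- c)) + 1)) \<partial>M)
        \<longlonglongrightarrow> prob {\<omega>\<in>space M. X' \<omega> \<le> c}"
      using integral_ramp_exp_tendsto_prob[OF X'] by simp
  qed
  then show "cdf (distr M borel X) = cdf (distr M borel X')"
    using X X' by (auto simp: cdf_def measure_distr vimage_def Int_def conj_commute)
qed

section \<open>Passage times and path evaluation along the rationals\<close>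

text \<open>If \<open>l\<close> never exceeds \<open>t\<close>, the infimum is \<open>\<infinity>\<close> and \<open>real_of_ereal\<close> turns it into \<open>0\<close>.\<close>
definition passage_time :: "real \<Rightarrow> (real \<Rightarrow> real) \<Rightarrow> real" where
  "passage_time t l = real_of_ereal (INF q\<in>\<rat>. if 0 \<le> q \<and> t < l q then ereal q else \<infinity>)"

lemma passage_time_nonneg: "0 \<le> passage_time t l"
proof -
  have "0 \<le> (INF q\<in>\<rat>. if 0 \<le> q \<and> t < l q then ereal q else \<infinity>)"
    by (rule INF_greatest) auto
  then show ?thesis
    unfolding passage_time_def by (simp add: real_of_ereal_pos)
qed

lemma passage_time_eq_Inf:
  assumes mono: "mono_on {0..} l" and exceeds: "\<exists>u\<ge>0. t < l u"
  shows "passage_time t l = Inf {u. 0 \<le> u \<and> t < l u}"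
proof -
  define S where "S = {u. 0 \<le> u \<and> t < l u}"
  have S_ne: "S \<noteq> {}" and S_bdd: "bdd_below S"
    using exceeds by (auto simp: S_def intro: bdd_belowI[of _ 0])
  have "(INF q\<in>\<rat>. if 0 \<le> q \<and> t < l q then ereal q else \<infinity>) = ereal (Inf S)"
  proof (rule antisym)
    show "ereal (Inf S) \<le> (INF q\<in>\<rat>. if 0 \<le> q \<and> t < l q then ereal q else \<infinity>)"
      using cInf_lower[OF _ S_bdd] by (intro INF_greatest) (auto simp: S_def)
    show "(INF q\<in>\<rat>. if 0 \<le> q \<and> t < l q then ereal q else \<infinity>) \<le> ereal (Inf S)"
    proof (rule ereal_le_epsilon2)
      fix e :: real
      assume e: "0 < e"
      then obtain u where u: "u \<in> S" "u < Inf S + e / 2"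
        using cInf_less_iff[OF S_ne S_bdd, of "Inf S + e / 2"] by auto
      obtain q where q: "q \<in> \<rat>" "u < q" "q < u + e / 2"
        using Rats_dense_in_real[of u "u + e / 2"] e by auto
      have "l u \<le> l q"
        using u q by (intro mono_onD[OF mono]) (auto simp: S_def)
      then have q_in: "0 \<le> q \<and> t < l q"
        using u q by (auto simp: S_def)
      have "(INF q\<in>\<rat>. if 0 \<le> q \<and> t < l q then ereal q else \<infinity>) \<le> (if 0 \<le> q \<and> t < l q then ereal q else \<infinity>)"
        using q by (intro INF_lower) auto
      also have "\<dots> \<le> ereal (Inf S) + ereal e"
        using q u q_in by simp
      finally show "(INF q\<in>\<rat>. if 0 \<le> q \<and> t < l q then ereal q else \<infinity>) \<le> ereal (Inf S) + ereal e" .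
    qed
  qed
  then show ?thesis
    by (simp add: passage_time_def S_def)
qed

lemma Inf_exceedance_le:
  fixes l :: "real \<Rightarrow> real"
  assumes "0 \<le> x" "t < l x"
  shows "Inf {u. 0 \<le> u \<and> t < l u} \<le> x"
  by (rule cInf_lower) (use assms in \<open>auto intro: bdd_belowI[of _ 0]\<close>)

lemma le_of_Inf_exceedance_le:
  fixes l :: "real \<Rightarrow> real"
  assumes mono: "mono_on {0..} l" and right_cont: "continuous (at_right x) l"
    and exceeds: "\<exists>u\<ge>0. t < l u" and x: "0 \<le> x" and le: "Inf {u. 0 \<le> u \<and> t < l u} \<le> x"
  shows "t \<le> l x"
proof -
  define S where "S = {u. 0 \<le> u \<and> t < l u}"
  have S_ne: "S \<noteq> {}" and S_bdd: "bdd_below S"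
    using exceeds by (auto simp: S_def intro: bdd_belowI[of _ 0])
  have "t \<le> l y" if "x < y" for y
  proof -
    have "Inf S < y"
      using le that by (simp add: S_def)
    then obtain u where u: "u \<in> S" "u < y"
      using cInf_less_iff[OF S_ne S_bdd] by auto
    then have "l u \<le> l y"
      using x that by (intro mono_onD[OF mono]) (auto simp: S_def)
    then show ?thesis
      using u by (auto simp: S_def)
  qed
  then have "eventually (\<lambda>y. t \<le> l y) (at_right x)"
    unfolding eventually_at_right_field by (intro exI[of _ "x + 1"]) auto
  moreover have "(l \<longlongrightarrow> l x) (at_right x)"
    using right_cont by (simp add: continuous_within)
  ultimately show ?thesis
    using tendsto_lowerbound by (metis trivial_limit_at_right_real)
qed

lemma passage_time_measurable[measurable]:
  "passage_time t \<in> borel_measurable (Pi\<^sub>M UNIV (\<lambda>_. borel))"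
proof -
  have "(\<lambda>l. INF q\<in>\<rat>. if 0 \<le> q \<and> t < l q then ereal q else \<infinity>) \<in> borel_measurable (Pi\<^sub>M UNIV (\<lambda>_. borel))"
    by (rule borel_measurable_INF[OF countable_rat]) measurable
  then show ?thesis
    unfolding passage_time_def[abs_def] by measurable
qed

lemma measurable_passage_time_process:
  assumes "\<And>u. 0 \<le> u \<Longrightarrow> L u \<in> borel_measurable M"
  shows "(\<lambda>\<omega>. passage_time t (\<lambda>u. L u \<omega>)) \<in> borel_measurable M"
proof -
  have "(\<lambda>\<omega>. if 0 \<le> q \<and> t < L q \<omega> then ereal q else \<infinity>) \<in> borel_measurable M" for q
  proof (cases "0 \<le> q")
    case True
    then have [measurable]: "L q \<in> borel_measurable M"
      by (rule assms)
    show ?thesis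
      by measurable
  qed simp
  then have "(\<lambda>\<omega>. INF q\<in>\<rat>. if 0 \<le> q \<and> t < L q \<omega> then ereal q else \<infinity>) \<in> borel_measurable M"
    by (intro borel_measurable_INF[OF countable_rat])
  then show ?thesis
    unfolding passage_time_def by measurable
qed

definition rat_right_limit :: "(real \<Rightarrow> real) \<Rightarrow> real \<Rightarrow> real" where
  "rat_right_limit n s = real_of_ereal (INF q\<in>\<rat>. if s < q then ereal (n q) else \<infinity>)"

lemma rat_right_limit_measurable:
  "(\<lambda>p. rat_right_limit (fst p) (snd p))
    \<in> borel_measurable (Pi\<^sub>M UNIV (\<lambda>_. borel) \<Otimes>\<^sub>M (borel :: real measure))"
proof -
  have "(\<lambda>p. INF q\<in>\<rat>. if snd p < q then ereal (fst p q) else \<infinity>)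
      \<in> borel_measurable (Pi\<^sub>M UNIV (\<lambda>_. borel) \<Otimes>\<^sub>M (borel :: real measure))"
    by (rule borel_measurable_INF[OF countable_rat]) measurable
  then show ?thesis
    unfolding rat_right_limit_def by measurable
qed

lemma rat_right_limit_eq:
  fixes n :: "real \<Rightarrow> real"
  assumes mono: "mono_on {0..} n" and s: "0 \<le> s"
    and locally_const: "eventually (\<lambda>r. n r = n s) (at_right s)"
  shows "rat_right_limit n s = n s"
proof -
  have "(INF q\<in>\<rat>. if s < q then ereal (n q) else \<infinity>) = ereal (n s)"
  proof (rule antisym)
    show "ereal (n s) \<le> (INF q\<in>\<rat>. if s < q then ereal (n q) else \<infinity>)"
      using mono_onD[OF mono, of s] s by (intro INF_greatest) auto
    obtain b where b: "s < b" "\<And>y. s < y \<Longrightarrow> y < b \<Longrightarrow> n y = n s"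
      using locally_const unfolding eventually_at_right_field by auto
    obtain q where q: "q \<in> \<rat>" "s < q" "q < b"
      using Rats_dense_in_real[OF b(1)] by auto
    have "(INF q\<in>\<rat>. if s < q then ereal (n q) else \<infinity>) \<le> (if s < q then ereal (n q) else \<infinity>)"
      using q by (intro INF_lower) auto
    also have "\<dots> = ereal (n s)"
      using q b by simp
    finally show "(INF q\<in>\<rat>. if s < q then ereal (n q) else \<infinity>) \<le> ereal (n s)" .
  qed
  then show ?thesis
    by (simp add: rat_right_limit_def)
qed

lemma rat_right_limit_std_poisson_process:
  assumes P: "std_poisson_process M N" and \<omega>: "\<omega> \<in> space M" and s: "0 \<le> s"
  shows "rat_right_limit (\<lambda>t. real (N t \<omega>)) s = real (N s \<omega>)"
proof (rule rat_right_limit_eq[OF _ s])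
  show "mono_on {0..} (\<lambda>t. real (N t \<omega>))"
    using P \<omega> by (auto simp: std_poisson_process_def mono_on_def)
  have "eventually (\<lambda>r. N r \<omega> = N s \<omega>) (at_right s)"
    using P \<omega> s by (auto simp: std_poisson_process_def)
  then show "eventually (\<lambda>r. real (N r \<omega>) = real (N s \<omega>)) (at_right s)"
    by eventually_elim simp
qed

lemma right_continuous_squeeze_eq:
  fixes F1 F2 G H :: "real \<Rightarrow> real"
  assumes right_cont1: "\<And>x. continuous (at_right x) F1" and right_cont2: "\<And>x. continuous (at_right x) F2"
    and neg1: "\<And>x. x < 0 \<Longrightarrow> F1 x = 0" and neg2: "\<And>x. x < 0 \<Longrightarrow> F2 x = 0"
    and squeeze1: "\<And>x. 0 \<le> x \<Longrightarrow> G x \<le> F1 x \<and> F1 x \<le> H x"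
    and squeeze2: "\<And>x. 0 \<le> x \<Longrightarrow> G x \<le> F2 x \<and> F2 x \<le> H x"
    and H_le_G: "\<And>x x'. 0 \<le> x \<Longrightarrow> x < x' \<Longrightarrow> H x \<le> G x'"
  shows "F1 = F2"
proof -
  have le: "Fa x \<le> Fb x"
    if right_cont: "\<And>x. continuous (at_right x) Fb"
      and nega: "\<And>x. x < 0 \<Longrightarrow> Fa x = 0" and negb: "\<And>x. x < 0 \<Longrightarrow> Fb x = 0"
      and squeezea: "\<And>x. 0 \<le> x \<Longrightarrow> G x \<le> Fa x \<and> Fa x \<le> H x"
      and squeezeb: "\<And>x. 0 \<le> x \<Longrightarrow> G x \<le> Fb x \<and> Fb x \<le> H x"
    for Fa Fb :: "real \<Rightarrow> real" and x
  proof (cases "x < 0")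
    case True
    then show ?thesis
      using nega negb by simp
  next
    case False
    have "Fa x \<le> Fb y" if "x < y" for y
      using squeezea[of x] H_le_G[of x y] squeezeb[of y] False that by force
    then have "eventually (\<lambda>y. Fa x \<le> Fb y) (at_right x)"
      unfolding eventually_at_right_field by (intro exI[of _ "x + 1"]) auto
    moreover have "(Fb \<longlongrightarrow> Fb x) (at_right x)"
      using right_cont by (simp add: continuous_within)
    ultimately show ?thesis
      using tendsto_lowerbound by (metis trivial_limit_at_right_real)
  qed
  show ?thesis
    using le[of F2 F1, OF right_cont2 neg1 neg2 squeeze1 squeeze2]
      le[of F1 F2, OF right_cont1 neg2 neg1 squeeze2 squeeze1] by (intro ext antisym)
qed

lemma (in prob_space) cdf_distr_eq_prob:
  "V \<in> borel_measurable M \<Longrightarrow> cdf (distr M borel V) x = prob {\<omega>\<in>space M. V \<omega> \<le> x}"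
  by (simp add: cdf_def measure_distr vimage_def Int_def conj_commute)

lemma (in prob_space) cdf_distr_nonneg_eq_0:
  assumes "V \<in> borel_measurable M" "\<And>\<omega>. \<omega> \<in> space M \<Longrightarrow> 0 \<le> V \<omega>" "x < 0"
  shows "cdf (distr M borel V) x = 0"
proof -
  have empty: "{\<omega>\<in>space M. V \<omega> \<le> x} = {}"
    using assms(2,3) by force
  show ?thesis
    unfolding cdf_distr_eq_prob[OF assms(1)] empty by simp
qed

lemma (in prob_space) integral_indep_var_eq_iterated:
  fixes H :: "'b \<times> 'b \<Rightarrow> real"
  assumes indep: "indep_var S X T Y"
    and H: "H \<in> borel_measurable (S \<Otimes>\<^sub>M T)" and H_bound: "\<And>p. \<bar>H p\<bar> \<le> B"
  shows "(\<integral>\<omega>. H (X \<omega>, Y \<omega>) \<partial>M) = (\<integral>\<omega>. (\<integral>\<omega>'. H (X \<omega>', Y \<omega>) \<partial>M) \<partial>M)"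
proof -
  have [measurable]: "X \<in> M \<rightarrow>\<^sub>M S" "Y \<in> M \<rightarrow>\<^sub>M T"
    and prod: "distr M S X \<Otimes>\<^sub>M distr M T Y = distr M (S \<Otimes>\<^sub>M T) (\<lambda>x. (X x, Y x))"
    using indep indep_var_distribution_eq by auto
  note H[measurable]
  interpret PX: prob_space "distr M S X"
    by (rule prob_space_distr) simp
  interpret PY: prob_space "distr M T Y"
    by (rule prob_space_distr) simp
  interpret PXY: pair_prob_space "distr M S X" "distr M T Y" ..
  have "(\<integral>\<omega>. H (X \<omega>, Y \<omega>) \<partial>M) = integral\<^sup>L (distr M (S \<Otimes>\<^sub>M T) (\<lambda>x. (X x, Y x))) H"
    by (rule integral_distr[symmetric]) auto
  also have "\<dots> = integral\<^sup>L (distr M S X \<Otimes>\<^sub>M distr M T Y) (\<lambda>(x, y). H (x, y))"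
    by (simp add: prod)
  also have "\<dots> = (\<integral>y. (\<integral>x. H (x, y) \<partial>distr M S X) \<partial>distr M T Y)"
    using H_bound by (intro PXY.integral_snd[symmetric] PXY.P.integrable_const_bound[where B=B]) auto
  also have "\<dots> = (\<integral>y. (\<integral>\<omega>'. H (X \<omega>', y) \<partial>M) \<partial>distr M T Y)"
    by (rule Bochner_Integration.integral_cong) (auto intro!: integral_distr)
  also have "\<dots> = (\<integral>\<omega>. (\<integral>\<omega>'. H (X \<omega>', Y \<omega>) \<partial>M) \<partial>M)"
  proof (rule integral_distr)
    have "(\<lambda>(y, \<omega>'). H (X \<omega>', y)) \<in> borel_measurable (T \<Otimes>\<^sub>M M)"
      by measurable
    then show "(\<lambda>y. \<integral>\<omega>'. H (X \<omega>', y) \<partial>M) \<in> borel_measurable T"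
      by (rule borel_measurable_lebesgue_integral)
  qed simp
  finally show ?thesis .
qed

lemma integral_eq_if_AE_mem:
  fixes f g h :: "'a \<Rightarrow> real"
  assumes A: "A \<in> sets M" and AE_A: "AE \<omega> in M. \<omega> \<in> A"
    and g: "g \<in> borel_measurable M" and h: "h \<in> borel_measurable M"
    and f: "\<And>\<omega>. \<omega> \<in> space M \<Longrightarrow> f \<omega> = (if \<omega> \<in> A then g \<omega> else h \<omega>)"
  shows "integral\<^sup>L M f = integral\<^sup>L M g"
proof -
  have "integral\<^sup>L M f = (\<integral>\<omega>. (if \<omega> \<in> A then g \<omega> else h \<omega>) \<partial>M)"
    using f by (rule Bochner_Integration.integral_cong[OF refl])
  also have "\<dots> = integral\<^sup>L M g"
    using A g h AE_A by (intro integral_cong_AE) auto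
  finally show ?thesis .
qed

section \<open>The inverse stable subordinator\<close>

locale stable_subordinator_space = prob_space M for M :: "'a measure" +
  fixes \<alpha> :: real and L :: "real \<Rightarrow> 'a \<Rightarrow> real"
  assumes alpha_pos: "0 < \<alpha>" and stable_subordinator: "stable_subordinator M \<alpha> L"
begin

lemma L_measurable: "0 \<le> t \<Longrightarrow> L t \<in> borel_measurable M"
  using stable_subordinator by (simp add: stable_subordinator_def)

lemma L_zero: "\<omega> \<in> space M \<Longrightarrow> L 0 \<omega> = 0"
  using stable_subordinator by (simp add: stable_subordinator_def)

lemma L_mono: "\<omega> \<in> space M \<Longrightarrow> mono_on {0..} (\<lambda>t. L t \<omega>)"
  using stable_subordinator by (simp add: stable_subordinator_def)

lemma L_right_cont: "\<omega> \<in> space M \<Longrightarrow> 0 \<le> t \<Longrightarrow> continuous (at_right t) (\<lambda>s. L s \<omega>)"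
  using stable_subordinator by (simp add: stable_subordinator_def)

lemma L_laplace: "0 \<le> t \<Longrightarrow> 0 \<le> u \<Longrightarrow> (\<integral>\<omega>. exp (- u * L t \<omega>) \<partial>M) = exp (- t * u powr \<alpha>)"
  using stable_subordinator by (simp add: stable_subordinator_def)

lemma L_le: "\<omega> \<in> space M \<Longrightarrow> 0 \<le> s \<Longrightarrow> s \<le> t \<Longrightarrow> L s \<omega> \<le> L t \<omega>"
  using mono_onD[OF L_mono] by simp

lemma L_nonneg: "\<omega> \<in> space M \<Longrightarrow> 0 \<le> t \<Longrightarrow> 0 \<le> L t \<omega>"
  using L_le[of \<omega> 0 t] L_zero by simp

lemma distr_L_self_similar:
  assumes s: "0 \<le> s" and c: "0 < c"
  shows "distr M borel (L (c powr \<alpha> * s)) = distr M borel (\<lambda>\<omega>. c * L s \<omega>)"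
proof (rule distr_eq_of_laplace_eq)
  have cs: "0 \<le> c powr \<alpha> * s"
    using s c by simp
  show "L (c powr \<alpha> * s) \<in> borel_measurable M" "(\<lambda>\<omega>. c * L s \<omega>) \<in> borel_measurable M"
    using L_measurable[OF cs] L_measurable[OF s] by auto
  show "0 \<le> L (c powr \<alpha> * s) \<omega>" "0 \<le> c * L s \<omega>" if "\<omega> \<in> space M" for \<omega>
    using L_nonneg[OF that] cs s c by auto
  fix u :: real
  assume u: "0 \<le> u"
  have "(\<integral>\<omega>. exp (- u * (c * L s \<omega>)) \<partial>M) = (\<integral>\<omega>. exp (- (u * c) * L s \<omega>) \<partial>M)"
    by (simp add: mult.assoc)
  also have "\<dots> = exp (- (c powr \<alpha> * s) * u powr \<alpha>)"
    using L_laplace[OF s, of "u * c"] u c by (simp add: powr_mult mult_ac)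
  also have "\<dots> = (\<integral>\<omega>. exp (- u * L (c powr \<alpha> * s) \<omega>) \<partial>M)"
    using L_laplace[OF cs u] by simp
  finally show "(\<integral>\<omega>. exp (- u * L (c powr \<alpha> * s) \<omega>) \<partial>M) = (\<integral>\<omega>. exp (- u * (c * L s \<omega>)) \<partial>M)"
    by simp
qed

lemma prob_L_self_similar:
  assumes s: "0 \<le> s" and c: "0 < c" and B: "B \<in> sets borel"
  shows "prob {\<omega>\<in>space M. L (c powr \<alpha> * s) \<omega> \<in> B} = prob {\<omega>\<in>space M. c * L s \<omega> \<in> B}"
proof -
  have cs: "0 \<le> c powr \<alpha> * s"
    using s c by simp
  have "measure (distr M borel (L (c powr \<alpha> * s))) B = measure (distr M borel (\<lambda>\<omega>. c * L s \<omega>)) B"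
    using distr_L_self_similar[OF s c] by simp
  then show ?thesis
    using L_measurable[OF cs] L_measurable[OF s] B
    by (simp add: measure_distr vimage_def Int_def conj_commute)
qed

definition exceeds :: "real \<Rightarrow> 'a set" where
  "exceeds t = {\<omega>\<in>space M. \<exists>u\<ge>0. t < L u \<omega>}"

lemma space_diff_exceeds: "space M - exceeds t = {\<omega>\<in>space M. \<forall>n::nat. L (real n) \<omega> \<le> t}"
proof -
  have "(\<exists>u\<ge>0. t < L u \<omega>) \<longleftrightarrow> (\<exists>n::nat. t < L (real n) \<omega>)" if \<omega>: "\<omega> \<in> space M" for \<omega>
  proof
    assume "\<exists>u\<ge>0. t < L u \<omega>"
    then obtain u where u: "0 \<le> u" "t < L u \<omega>"
      by auto
    obtain n :: nat where "u \<le> real n"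
      using real_arch_simple by blast
    then show "\<exists>n::nat. t < L (real n) \<omega>"
      using L_le[OF \<omega> u(1)] u(2) by (metis order.strict_trans2)
  next
    assume "\<exists>n::nat. t < L (real n) \<omega>"
    then show "\<exists>u\<ge>0. t < L u \<omega>"
      using of_nat_0_le_iff by blast
  qed
  then show ?thesis
    unfolding exceeds_def by (auto simp: not_less) (metis not_less)
qed

lemma sets_exceeds[measurable]: "exceeds t \<in> sets M"
proof -
  have [measurable]: "L (real n) \<in> borel_measurable M" for n :: nat
    by (rule L_measurable) simp
  have "space M - exceeds t \<in> sets M"
    unfolding space_diff_exceeds by measurable
  then have "space M - (space M - exceeds t) \<in> sets M"
    by auto
  moreover have "space M - (space M - exceeds t) = exceeds t"
    by (auto simp: exceeds_def)
  ultimately show ?thesis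
    by simp
qed

lemma prob_not_exceeds_le: "prob (space M - exceeds t) \<le> exp (t - real n)"
proof -
  have [measurable]: "L (real n) \<in> borel_measurable M"
    by (rule L_measurable) simp
  have "prob (space M - exceeds t) \<le> prob {\<omega>\<in>space M. exp (- t) \<le> exp (- L (real n) \<omega>)}"
    by (rule finite_measure_mono) (auto simp: space_diff_exceeds)
  also have "\<dots> \<le> (\<integral>\<omega>. exp (- L (real n) \<omega>) \<partial>M) / exp (- t)"
    by (rule integral_Markov_inequality_measure[where A="space M"])
      (auto intro!: integrable_const_bound[where B=1] simp: L_nonneg)
  also have "(\<integral>\<omega>. exp (- L (real n) \<omega>) \<partial>M) = exp (- real n)"
    using L_laplace[of "real n" 1] by simp
  also have "exp (- real n) / exp (- t) = exp (t - real n)"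
    by (simp add: exp_diff exp_minus field_simps)
  finally show ?thesis .
qed

lemma null_sets_not_exceeds: "space M - exceeds t \<in> null_sets M"
proof -
  have "prob (space M - exceeds t) \<le> 0"
  proof (rule field_le_epsilon)
    fix e :: real
    assume e: "0 < e"
    obtain n :: nat where "t - ln e < real n"
      using reals_Archimedean2 by blast
    then have "exp (t - real n) < e"
      using e by (metis exp_less_cancel_iff exp_ln diff_less_eq add.commute diff_less_eq)
    then show "prob (space M - exceeds t) \<le> 0 + e"
      using prob_not_exceeds_le[of t n] by simp
  qed
  then show ?thesis
    by (simp add: null_sets_def emeasure_eq_measure measure_le_0_iff)
qed

lemma AE_exceeds: "AE \<omega> in M. \<omega> \<in> exceeds t"
  using null_sets_not_exceeds[of t]
  by (intro AE_I'[of "space M - exceeds t"]) auto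

definition passage :: "real \<Rightarrow> 'a \<Rightarrow> real" where
  "passage t \<omega> = passage_time t (\<lambda>u. L u \<omega>)"

lemma passage_measurable[measurable]: "passage t \<in> borel_measurable M"
  unfolding passage_def[abs_def] by (rule measurable_passage_time_process) (rule L_measurable)

lemma passage_nonneg: "0 \<le> passage t \<omega>"
  by (simp add: passage_def passage_time_nonneg)

lemma passage_eq_Inf: "\<omega> \<in> exceeds t \<Longrightarrow> passage t \<omega> = Inf {u. 0 \<le> u \<and> t < L u \<omega>}"
  unfolding passage_def exceeds_def by (rule passage_time_eq_Inf) (auto intro: L_mono)

lemma passage_le: "\<omega> \<in> space M \<Longrightarrow> 0 \<le> x \<Longrightarrow> t < L x \<omega> \<Longrightarrow> passage t \<omega> \<le> x"
  using passage_eq_Inf[of \<omega> t] Inf_exceedance_le[of x t "\<lambda>u. L u \<omega>"] by (force simp: exceeds_def)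

lemma le_L_of_passage_le: "\<omega> \<in> exceeds t \<Longrightarrow> 0 \<le> x \<Longrightarrow> passage t \<omega> \<le> x \<Longrightarrow> t \<le> L x \<omega>"
  using passage_eq_Inf[of \<omega> t] le_of_Inf_exceedance_le[of "\<lambda>u. L u \<omega>" x t] L_mono L_right_cont
  by (auto simp: exceeds_def)

lemma passage_pos: "\<omega> \<in> exceeds t \<Longrightarrow> 0 < t \<Longrightarrow> 0 < passage t \<omega>"
  using le_L_of_passage_le[of \<omega> t 0] L_zero passage_nonneg[of t \<omega>]
  by (force simp: exceeds_def)

lemma prob_passage_le_bounds:
  assumes x: "0 \<le> x"
  shows "prob {\<omega>\<in>space M. t < L x \<omega>} \<le> prob {\<omega>\<in>space M. passage t \<omega> \<le> x}"
    and "prob {\<omega>\<in>space M. passage t \<omega> \<le> x} \<le> prob {\<omega>\<in>space M. t \<le> L x \<omega>}"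
proof -
  have [measurable]: "L x \<in> borel_measurable M"
    using L_measurable[OF x] .
  show "prob {\<omega>\<in>space M. t < L x \<omega>} \<le> prob {\<omega>\<in>space M. passage t \<omega> \<le> x}"
    by (rule finite_measure_mono) (use passage_le x in auto)
  have "prob {\<omega>\<in>space M. passage t \<omega> \<le> x} \<le> prob ({\<omega>\<in>space M. t \<le> L x \<omega>} \<union> (space M - exceeds t))"
    by (rule finite_measure_mono) (use le_L_of_passage_le x sets_exceeds in \<open>auto simp: exceeds_def\<close>)
  also have "\<dots> = prob {\<omega>\<in>space M. t \<le> L x \<omega>}"
    by (rule measure_Un_null_set) (auto intro: null_sets_not_exceeds)
  finally show "prob {\<omega>\<in>space M. passage t \<omega> \<le> x} \<le> prob {\<omega>\<in>space M. t \<le> L x \<omega>}" .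
qed

lemma prob_L_ge_le_prob_L_gt:
  assumes t: "0 < t" and x: "0 \<le> x" and xx': "x < x'"
  shows "prob {\<omega>\<in>space M. t \<le> L x \<omega>} \<le> prob {\<omega>\<in>space M. t < L x' \<omega>}"
proof (cases "x = 0")
  case True
  have empty: "{\<omega>\<in>space M. t \<le> L 0 \<omega>} = {}"
    using L_zero t by auto
  show ?thesis
    unfolding True empty by simp
next
  case False
  then have x_pos: "0 < x"
    using x by simp
  define c where "c = (x' / x) powr (1 / \<alpha>)"
  text \<open>Self-similarity lets \<open>L x'\<close> be written as \<open>c L x\<close> in law with \<open>c > 1\<close>.\<close>
  have c: "1 < c"
    unfolding c_def using x_pos xx' alpha_pos by (intro gr_one_powr) auto
  have cx: "c powr \<alpha> * x = x'"
    unfolding c_def using x_pos xx' alpha_pos by (simp add: powr_powr)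
  have [measurable]: "L x \<in> borel_measurable M"
    using L_measurable[OF x] .
  have "prob {\<omega>\<in>space M. t \<le> L x \<omega>} \<le> prob {\<omega>\<in>space M. c * L x \<omega> \<in> {t<..}}"
  proof (rule finite_measure_mono)
    show "{\<omega>\<in>space M. t \<le> L x \<omega>} \<subseteq> {\<omega>\<in>space M. c * L x \<omega> \<in> {t<..}}"
    proof
      fix \<omega>
      assume "\<omega> \<in> {\<omega>\<in>space M. t \<le> L x \<omega>}"
      then have \<omega>: "\<omega> \<in> space M" "t \<le> L x \<omega>"
        by auto
      then have "L x \<omega> < c * L x \<omega>"
        using t c by simp
      then show "\<omega> \<in> {\<omega>\<in>space M. c * L x \<omega> \<in> {t<..}}"
        using \<omega> by simp
    qed
  qed measurable
  also have "\<dots> = prob {\<omega>\<in>space M. L (c powr \<alpha> * x) \<omega> \<in> {t<..}}"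
    using c x by (intro prob_L_self_similar[symmetric]) auto
  finally show ?thesis
    by (simp add: cx)
qed

lemma prob_scaled_passage_le_bounds:
  assumes t: "0 < t" and x: "0 \<le> x"
  shows "prob {\<omega>\<in>space M. t < L x \<omega>} \<le> prob {\<omega>\<in>space M. t powr \<alpha> * passage 1 \<omega> \<le> x}"
    and "prob {\<omega>\<in>space M. t powr \<alpha> * passage 1 \<omega> \<le> x} \<le> prob {\<omega>\<in>space M. t \<le> L x \<omega>}"
proof -
  define s where "s = x / t powr \<alpha>"
  have s: "0 \<le> s" and ts: "t powr \<alpha> * s = x"
    using x t by (simp_all add: s_def)
  have scaled: "{\<omega>\<in>space M. t powr \<alpha> * passage 1 \<omega> \<le> x} = {\<omega>\<in>space M. passage 1 \<omega> \<le> s}"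
    using t by (auto simp: s_def field_simps)
  have "prob {\<omega>\<in>space M. t < L x \<omega>} = prob {\<omega>\<in>space M. t * L s \<omega> \<in> {t<..}}"
    using prob_L_self_similar[OF s t, of "{t<..}"] by (simp add: ts)
  also have "\<dots> = prob {\<omega>\<in>space M. 1 < L s \<omega>}"
    using t by simp
  finally show "prob {\<omega>\<in>space M. t < L x \<omega>} \<le> prob {\<omega>\<in>space M. t powr \<alpha> * passage 1 \<omega> \<le> x}"
    using prob_passage_le_bounds(1)[OF s, of 1] by (simp add: scaled)
  have "prob {\<omega>\<in>space M. t \<le> L x \<omega>} = prob {\<omega>\<in>space M. t * L s \<omega> \<in> {t..}}"
    using prob_L_self_similar[OF s t, of "{t..}"] by (simp add: ts)
  also have "\<dots> = prob {\<omega>\<in>space M. 1 \<le> L s \<omega>}"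
    using t by simp
  finally show "prob {\<omega>\<in>space M. t powr \<alpha> * passage 1 \<omega> \<le> x} \<le> prob {\<omega>\<in>space M. t \<le> L x \<omega>}"
    using prob_passage_le_bounds(2)[OF s, of 1] by (simp add: scaled)
qed

lemma distr_passage_self_similar:
  assumes t: "0 < t"
  shows "distr M borel (passage t) = distr M borel (\<lambda>\<omega>. t powr \<alpha> * passage 1 \<omega>)"
proof (rule cdf_unique)
  have scaled[measurable]: "(\<lambda>\<omega>. t powr \<alpha> * passage 1 \<omega>) \<in> borel_measurable M"
    by measurable
  have scaled_nonneg: "0 \<le> t powr \<alpha> * passage 1 \<omega>" for \<omega>
    by (simp add: passage_nonneg)
  show dist1: "real_distribution (distr M borel (passage t))"
    by (rule real_distribution_distr) measurable
  show dist2: "real_distribution (distr M borel (\<lambda>\<omega>. t powr \<alpha> * passage 1 \<omega>))"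
    by (rule real_distribution_distr[OF scaled])
  show "cdf (distr M borel (passage t)) = cdf (distr M borel (\<lambda>\<omega>. t powr \<alpha> * passage 1 \<omega>))"
  proof (rule right_continuous_squeeze_eq[where G="\<lambda>x. prob {\<omega>\<in>space M. t < L x \<omega>}"
        and H="\<lambda>x. prob {\<omega>\<in>space M. t \<le> L x \<omega>}"])
    show "continuous (at_right x) (cdf (distr M borel (passage t)))"
      "continuous (at_right x) (cdf (distr M borel (\<lambda>\<omega>. t powr \<alpha> * passage 1 \<omega>)))" for x
      using dist1 dist2
      by (simp_all add: real_distribution.finite_borel_measure_M finite_borel_measure.cdf_is_right_cont)
    show "cdf (distr M borel (passage t)) x = 0"
      "cdf (distr M borel (\<lambda>\<omega>. t powr \<alpha> * passage 1 \<omega>)) x = 0" if "x < 0" for x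
      using that passage_nonneg scaled_nonneg by (auto intro: cdf_distr_nonneg_eq_0)
  qed (use prob_passage_le_bounds prob_scaled_passage_le_bounds[OF t] prob_L_ge_le_prob_L_gt[OF t]
      in \<open>simp_all add: cdf_distr_eq_prob\<close>)
qed

end

section \<open>The time-changed Poisson process\<close>

locale time_changed_poisson = stable_subordinator_space M \<alpha> L for M :: "'a measure" and \<alpha> L +
  fixes N1 :: "real \<Rightarrow> 'a \<Rightarrow> nat" and Y :: "real \<Rightarrow> 'a \<Rightarrow> real"
    and lam Lam :: "real \<Rightarrow> real" and \<beta> :: real
  assumes poisson: "std_poisson_process M N1"
    and Y_eq_Inf: "\<And>t \<omega>. Y t \<omega> = Inf {u. 0 \<le> u \<and> L u \<omega> > t}"
    and indep_N_L: "prob_space.indep_var M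
           (Pi\<^sub>M UNIV (\<lambda>_. borel)) (\<lambda>\<omega> t. real (N1 t \<omega>))
           (Pi\<^sub>M UNIV (\<lambda>_. borel)) (\<lambda>\<omega> t. L t \<omega>)"
    and lam_pos: "\<And>t. 0 \<le> t \<Longrightarrow> lam t > 0"
    and lam_integrable: "\<And>T. 0 \<le> T \<Longrightarrow> lam integrable_on {0..T}"
    and Lam_eq_integral: "\<And>t. 0 \<le> t \<Longrightarrow> Lam t = integral {0..t} lam"
    and Lam_at_top: "filterlim Lam at_top at_top"
    and Lam_regularly_varying: "\<And>x. 0 < x \<Longrightarrow> ((\<lambda>t. Lam (x * t) / Lam t) \<longlongrightarrow> x powr \<beta>) at_top"
begin

abbreviation paths :: "(real \<Rightarrow> real) measure" where
  "paths \<equiv> Pi\<^sub>M UNIV (\<lambda>_. borel)"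

definition N_path :: "'a \<Rightarrow> real \<Rightarrow> real" where
  "N_path \<omega> = (\<lambda>t. real (N1 t \<omega>))"

definition L_path :: "'a \<Rightarrow> real \<Rightarrow> real" where
  "L_path \<omega> = (\<lambda>t. L t \<omega>)"

lemma N_path_measurable[measurable]: "N_path \<in> M \<rightarrow>\<^sub>M paths"
  and L_path_measurable[measurable]: "L_path \<in> M \<rightarrow>\<^sub>M paths"
  using indep_N_L indep_var_distribution_eq unfolding N_path_def[abs_def] L_path_def[abs_def] by auto

lemma indep_N_path_L_path: "indep_var paths N_path paths L_path"
  using indep_N_L unfolding N_path_def[abs_def] L_path_def[abs_def] .

lemma N1_measurable[measurable]: "(\<lambda>\<omega>. real (N1 s \<omega>)) \<in> borel_measurable M"
  using measurable_compose[OF N_path_measurable measurable_component_singleton[of s UNIV "\<lambda>_. borel"]]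
  by (simp add: N_path_def)

lemma Lam_nonneg:
  assumes t: "0 \<le> t"
  shows "0 \<le> Lam t"
proof -
  have "0 \<le> integral {0..t} lam"
    using lam_pos by (intro integral_nonneg[OF lam_integrable[OF t]]) (simp add: less_imp_le)
  then show ?thesis
    using Lam_eq_integral[OF t] by simp
qed

lemma Lam_mono:
  assumes s: "0 \<le> s" and st: "s \<le> t"
  shows "Lam s \<le> Lam t"
proof -
  have t: "0 \<le> t"
    using s st by simp
  have "integral {0..s} lam \<le> integral {0..t} lam"
  proof (rule integral_subset_le[OF _ lam_integrable[OF s] lam_integrable[OF t]])
    show "{0..s} \<subseteq> {0..t}"
      using st by auto
    show "\<forall>x\<in>{0..t}. 0 \<le> lam x"
      using lam_pos by (auto intro: less_imp_le)
  qed
  then show ?thesis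
    using Lam_eq_integral[OF s] Lam_eq_integral[OF t] by simp
qed

definition Lam_ext :: "real \<Rightarrow> real" where
  "Lam_ext y = Lam (max 0 y)"

lemma Lam_ext_measurable[measurable]: "Lam_ext \<in> borel_measurable borel"
proof (rule borel_measurable_mono)
  show "mono Lam_ext"
    unfolding mono_def Lam_ext_def by (auto intro!: Lam_mono)
qed

lemma Lam_ext_eq: "0 \<le> y \<Longrightarrow> Lam_ext y = Lam y"
  by (simp add: Lam_ext_def)

text \<open>The integral of the test function given \<open>Y t = y\<close> (see \<open>cond_integral_eq\<close>), written in a form
  that is jointly measurable in the path and in \<open>y\<close>.\<close>
definition cond_integral :: "(real \<Rightarrow> real) \<Rightarrow> real \<Rightarrow> real \<Rightarrow> real" where
  "cond_integral f t y = (\<integral>\<omega>'. f (rat_right_limit (N_path \<omega>') (Lam_ext y) / Lam (t powr \<alpha>)) \<partial>M)"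

lemma cond_integral_eq:
  "0 \<le> y \<Longrightarrow> cond_integral f t y = (\<integral>\<omega>'. f (real (N1 (Lam y) \<omega>') / Lam (t powr \<alpha>)) \<partial>M)"
  unfolding cond_integral_def
  by (rule Bochner_Integration.integral_cong)
    (auto simp: Lam_ext_eq N_path_def rat_right_limit_std_poisson_process[OF poisson] Lam_nonneg)

lemma measurable_rat_right_limit_N_path:
  assumes "g \<in> borel_measurable K"
  shows "(\<lambda>(x, \<omega>'). rat_right_limit (N_path \<omega>') (g x)) \<in> borel_measurable (K \<Otimes>\<^sub>M M)"
proof -
  have "(\<lambda>(x, \<omega>'). (N_path \<omega>', g x)) \<in> (K \<Otimes>\<^sub>M M) \<rightarrow>\<^sub>M (paths \<Otimes>\<^sub>M (borel :: real measure))"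
    using assms by measurable
  from measurable_compose[OF this rat_right_limit_measurable] show ?thesis
    by (simp add: case_prod_beta')
qed

lemma cond_integral_measurable[measurable]:
  assumes f[measurable]: "f \<in> borel_measurable borel"
  shows "cond_integral f t \<in> borel_measurable borel"
proof -
  note measurable_rat_right_limit_N_path[OF Lam_ext_measurable, measurable]
  have "(\<lambda>(y, \<omega>'). f (rat_right_limit (N_path \<omega>') (Lam_ext y) / Lam (t powr \<alpha>)))
      \<in> borel_measurable (borel \<Otimes>\<^sub>M M)"
    by measurable
  then show ?thesis
    unfolding cond_integral_def[abs_def] by (rule borel_measurable_lebesgue_integral)
qed

lemma cond_integral_bound:
  assumes f[measurable]: "f \<in> borel_measurable borel" and f_bound: "\<And>y. \<bar>f y\<bar> \<le> B"
  shows "\<bar>cond_integral f t y\<bar> \<le> B"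
proof -
  have "(\<lambda>\<omega>'. (N_path \<omega>', Lam_ext y)) \<in> M \<rightarrow>\<^sub>M (paths \<Otimes>\<^sub>M borel)"
    by measurable
  from measurable_compose[OF this rat_right_limit_measurable]
  have "(\<lambda>\<omega>'. rat_right_limit (N_path \<omega>') (Lam_ext y)) \<in> borel_measurable M"
    by simp
  then have "integrable M (\<lambda>\<omega>'. f (rat_right_limit (N_path \<omega>') (Lam_ext y) / Lam (t powr \<alpha>)))"
    using f_bound by (intro integrable_const_bound[where B=B]) auto
  then have "\<bar>cond_integral f t y\<bar> \<le> (\<integral>\<omega>'. B \<partial>M)"
    unfolding cond_integral_def using f_bound
    by (intro order.trans[OF integral_abs_bound] integral_mono integrable_abs) auto
  then show ?thesis
    by (simp add: prob_space)
qed

lemma Y_eq_passage: "\<omega> \<in> exceeds t \<Longrightarrow> Y t \<omega> = passage t \<omega>"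
  using passage_eq_Inf Y_eq_Inf by simp

lemma Y_not_exceeds: "\<omega> \<in> space M \<Longrightarrow> \<omega> \<notin> exceeds t \<Longrightarrow> Y t \<omega> = Inf {}"
proof -
  assume "\<omega> \<in> space M" "\<omega> \<notin> exceeds t"
  then have empty: "{u. 0 \<le> u \<and> L u \<omega> > t} = {}"
    by (auto simp: exceeds_def)
  show ?thesis
    unfolding Y_eq_Inf[of t \<omega>] empty ..
qed

lemma integral_time_changed_eq_passage:
  assumes f[measurable]: "f \<in> borel_measurable borel" and f_bound: "\<And>y. \<bar>f y\<bar> \<le> B"
  shows "(\<integral>\<omega>. f (real (N1 (Lam (Y t \<omega>)) \<omega>) / Lam (t powr \<alpha>)) \<partial>M)
       = (\<integral>\<omega>. cond_integral f t (passage t \<omega>) \<partial>M)"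
proof -
  define c where "c = Lam (t powr \<alpha>)"
  define H where "H p = f (rat_right_limit (fst p) (Lam_ext (passage_time t (snd p))) / c)"
    for p :: "(real \<Rightarrow> real) \<times> (real \<Rightarrow> real)"
  have "(\<lambda>p. (fst p, Lam_ext (passage_time t (snd p)))) \<in> (paths \<Otimes>\<^sub>M paths) \<rightarrow>\<^sub>M (paths \<Otimes>\<^sub>M borel)"
    by measurable
  from measurable_compose[OF this rat_right_limit_measurable]
  have [measurable]: "(\<lambda>p. rat_right_limit (fst p) (Lam_ext (passage_time t (snd p))))
      \<in> borel_measurable (paths \<Otimes>\<^sub>M paths)"
    by simp
  have H[measurable]: "H \<in> borel_measurable (paths \<Otimes>\<^sub>M paths)"
    unfolding H_def[abs_def] by measurable
  have H_paths: "f (real (N1 (Lam (Y t \<omega>)) \<omega>) / c) = H (N_path \<omega>, L_path \<omega>)"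
    if \<omega>: "\<omega> \<in> exceeds t" for \<omega>
  proof -
    have space: "\<omega> \<in> space M"
      using \<omega> by (simp add: exceeds_def)
    have "rat_right_limit (N_path \<omega>) (Lam_ext (passage t \<omega>)) = real (N1 (Lam (passage t \<omega>)) \<omega>)"
      unfolding N_path_def Lam_ext_eq[OF passage_nonneg]
      by (rule rat_right_limit_std_poisson_process[OF poisson space Lam_nonneg[OF passage_nonneg]])
    then show ?thesis
      using Y_eq_passage[OF \<omega>] by (simp add: H_def passage_def L_path_def)
  qed
  have "(\<integral>\<omega>. f (real (N1 (Lam (Y t \<omega>)) \<omega>) / c) \<partial>M) = (\<integral>\<omega>. H (N_path \<omega>, L_path \<omega>) \<partial>M)"
    by (rule integral_eq_if_AE_mem[OF sets_exceeds[of t] AE_exceeds[of t],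
          where h="\<lambda>\<omega>. f (real (N1 (Lam (Inf {})) \<omega>) / c)"])
      (auto simp: H_paths Y_not_exceeds)
  also have "\<dots> = (\<integral>\<omega>. (\<integral>\<omega>'. H (N_path \<omega>', L_path \<omega>) \<partial>M) \<partial>M)"
    using f_bound by (intro integral_indep_var_eq_iterated[OF indep_N_path_L_path H]) (simp add: H_def)
  also have "\<dots> = (\<integral>\<omega>. cond_integral f t (passage t \<omega>) \<partial>M)"
    by (simp add: H_def cond_integral_def passage_def L_path_def c_def)
  finally show ?thesis
    by (simp add: c_def)
qed

lemma integral_time_changed_eq_scaled_passage:
  assumes t: "0 < t" and f[measurable]: "f \<in> borel_measurable borel" and f_bound: "\<And>y. \<bar>f y\<bar> \<le> B"
  shows "(\<integral>\<omega>. f (real (N1 (Lam (Y t \<omega>)) \<omega>) / Lam (t powr \<alpha>)) \<partial>M)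
       = (\<integral>\<omega>. cond_integral f t (t powr \<alpha> * passage 1 \<omega>) \<partial>M)"
proof -
  have "(\<integral>\<omega>. cond_integral f t (passage t \<omega>) \<partial>M) = integral\<^sup>L (distr M borel (passage t)) (cond_integral f t)"
    by (rule integral_distr[symmetric]) auto
  also have "\<dots> = integral\<^sup>L (distr M borel (\<lambda>\<omega>. t powr \<alpha> * passage 1 \<omega>)) (cond_integral f t)"
    by (simp add: distr_passage_self_similar[OF t])
  also have "\<dots> = (\<integral>\<omega>. cond_integral f t (t powr \<alpha> * passage 1 \<omega>) \<partial>M)"
    by (rule integral_distr) auto
  finally show ?thesis
    using integral_time_changed_eq_passage[OF f f_bound] by simp
qed

lemma cond_integral_scaled_passage_tendsto:
  assumes f: "continuous_on UNIV f" and f_bound: "\<And>y. \<bar>f y\<bar> \<le> B"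
  shows "((\<lambda>t. \<integral>\<omega>. cond_integral f t (t powr \<alpha> * passage 1 \<omega>) \<partial>M)
    \<longlongrightarrow> (\<integral>\<omega>. f (passage 1 \<omega> powr \<beta>) \<partial>M)) at_top"
proof (rule integral_dominated_convergence_at_top[where w="\<lambda>_. B"])
  have [measurable]: "f \<in> borel_measurable borel"
    using f by (rule borel_measurable_continuous_onI)
  show "(\<lambda>\<omega>. f (passage 1 \<omega> powr \<beta>)) \<in> borel_measurable M"
    "(\<lambda>\<omega>. cond_integral f t (t powr \<alpha> * passage 1 \<omega>)) \<in> borel_measurable M" for t
    by measurable
  show "\<forall>\<^sub>F t in at_top. AE \<omega> in M. norm (cond_integral f t (t powr \<alpha> * passage 1 \<omega>)) \<le> B"
    using cond_integral_bound[OF _ f_bound] by (intro always_eventually allI AE_I2) simp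
  show "AE \<omega> in M. ((\<lambda>t. cond_integral f t (t powr \<alpha> * passage 1 \<omega>)) \<longlongrightarrow> f (passage 1 \<omega> powr \<beta>)) at_top"
    using AE_exceeds[of 1]
  proof eventually_elim
    case (elim \<omega>)
    define y where "y = passage 1 \<omega>"
    have y: "0 < y"
      using passage_pos[OF elim] by (simp add: y_def)
    have t_alpha: "filterlim (\<lambda>t::real. t powr \<alpha>) at_top at_top"
      by (rule real_powr_at_top[OF alpha_pos])
    have "((\<lambda>t. Lam (y * t powr \<alpha>) / Lam (t powr \<alpha>)) \<longlongrightarrow> y powr \<beta>) at_top"
      by (rule filterlim_compose[OF Lam_regularly_varying[OF y] t_alpha])
    then have "((\<lambda>t. \<integral>\<omega>'. f (real (N1 (Lam (t powr \<alpha> * y)) \<omega>') / Lam (t powr \<alpha>)) \<partial>M) \<longlongrightarrow> f (y powr \<beta>)) at_top"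
      using y Lam_nonneg
      by (intro std_poisson_process_scaled_tendsto[OF poisson f f_bound]
          filterlim_compose[OF Lam_at_top t_alpha] always_eventually allI)
        (simp_all add: mult.commute)
    moreover have "cond_integral f t (t powr \<alpha> * y)
        = (\<integral>\<omega>'. f (real (N1 (Lam (t powr \<alpha> * y)) \<omega>') / Lam (t powr \<alpha>)) \<partial>M)" for t
      using y by (intro cond_integral_eq) simp
    ultimately show ?case
      by (simp add: y_def)
  qed
qed (simp)

lemma integral_Y_powr_eq_passage:
  fixes f :: "real \<Rightarrow> real"
  assumes f[measurable]: "f \<in> borel_measurable borel"
  shows "(\<integral>\<omega>. f (Y t \<omega> powr \<beta>) \<partial>M) = (\<integral>\<omega>. f (passage t \<omega> powr \<beta>) \<partial>M)"
  by (rule integral_eq_if_AE_mem[OF sets_exceeds[of t] AE_exceeds[of t], where h="\<lambda>_. f (Inf {} powr \<beta>)"])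
    (auto simp: Y_eq_passage Y_not_exceeds)

lemma conv_distr_time_changed:
  "conv_distr_at_top M (\<lambda>t \<omega>. real (N1 (Lam (Y t \<omega>)) \<omega>) / Lam (t powr \<alpha>)) (\<lambda>\<omega>. Y 1 \<omega> powr \<beta>)"
  unfolding conv_distr_at_top_def
proof (intro allI impI)
  fix f :: "real \<Rightarrow> real"
  assume "continuous_on UNIV f \<and> bounded (range f)"
  then obtain B where f: "continuous_on UNIV f" and f_bound: "\<And>y. \<bar>f y\<bar> \<le> B"
    by (metis bounded_iff rangeI real_norm_def)
  have f_measurable: "f \<in> borel_measurable borel"
    using f by (rule borel_measurable_continuous_onI)
  have "\<forall>\<^sub>F t in at_top. (\<integral>\<omega>. f (real (N1 (Lam (Y t \<omega>)) \<omega>) / Lam (t powr \<alpha>)) \<partial>M)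
      = (\<integral>\<omega>. cond_integral f t (t powr \<alpha> * passage 1 \<omega>) \<partial>M)"
    using eventually_gt_at_top[of 0]
    by eventually_elim (rule integral_time_changed_eq_scaled_passage[OF _ f_measurable f_bound])
  with cond_integral_scaled_passage_tendsto[OF f f_bound]
  show "((\<lambda>t. \<integral>\<omega>. f (real (N1 (Lam (Y t \<omega>)) \<omega>) / Lam (t powr \<alpha>)) \<partial>M)
      \<longlongrightarrow> (\<integral>\<omega>. f (Y 1 \<omega> powr \<beta>) \<partial>M)) at_top"
    unfolding integral_Y_powr_eq_passage[OF f_measurable] by (rule tendsto_cong[THEN iffD2, rotated])
qed

end

theorem mainTheorem4:
  fixes M :: "'a measure"
    and N1 :: "real \<Rightarrow> 'a \<Rightarrow> nat"
    and L Y :: "real \<Rightarrow> 'a \<Rightarrow> real"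
    and lam Lam :: "real \<Rightarrow> real"
    and \<alpha> \<beta> :: real
  assumes "prob_space M"
    and "std_poisson_process M N1"
    and "0 < \<alpha>" "\<alpha> < 1"
    and "stable_subordinator M \<alpha> L"
    and "\<And>t \<omega>. Y t \<omega> = Inf {u. 0 \<le> u \<and> L u \<omega> > t}"
    and "prob_space.indep_var M
           (Pi\<^sub>M UNIV (\<lambda>_. borel)) (\<lambda>\<omega> t. real (N1 t \<omega>))
           (Pi\<^sub>M UNIV (\<lambda>_. borel)) (\<lambda>\<omega> t. L t \<omega>)"
    and "\<And>t. 0 \<le> t \<Longrightarrow> lam t > 0"
    and "\<And>T. 0 \<le> T \<Longrightarrow> lam integrable_on {0..T}"
    and "\<And>t. 0 \<le> t \<Longrightarrow> Lam t = integral {0..t} lam"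
    and "filterlim Lam at_top at_top"
    and "\<And>x. 0 < x \<Longrightarrow> ((\<lambda>t. Lam (x * t) / Lam t) \<longlongrightarrow> x powr \<beta>) at_top"
  shows "conv_distr_at_top M
           (\<lambda>t \<omega>. real (N1 (Lam (Y t \<omega>)) \<omega>) / Lam (t powr \<alpha>))
           (\<lambda>\<omega>. Y 1 \<omega> powr \<beta>)"
proof -
  interpret time_changed_poisson M \<alpha> L N1 Y lam Lam \<beta>
    unfolding time_changed_poisson_def time_changed_poisson_axioms_def
      stable_subordinator_space_def stable_subordinator_space_axioms_def
    using assms by (intro conjI allI impI) blast+
  show ?thesis
    by (rule conv_distr_time_changed)
qed

end
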